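(* Consider the market objective described in the context and fix a bid profile $\mathcal{B}$ with $J(\mathcal{B}_L)<\infty$. Let $$k_{\mathrm{feas}}=\max\{|R|:\ R\subseteq L,\ J(\mathcal{B}_{L\setminus R})<\infty\}$$ be the maximum number of bidders that can be removed while keeping the problem feasible, and assume $k_{\mathrm{feas}}\ge1$. Then for all $K,S\subseteq L$ with $J(\mathcal{B}_{S\setminus K})<\infty$, $$\frac{1}{k_{\mathrm{feas}}}\sum_{l\in K}\big[J(\mathcal{B}_{S\setminus\{l\}})-J(\mathcal{B}_S)\big]\le J(\mathcal{B}_{S\setminus K})-J(\mathcal{B}_S).$$ Consequently the market objective is weakly supermodular, with supermodularity ratio $\gamma_{\sup}\ge 1/k_{\mathrm{feas}}>0$ (where $k_{\mathrm{feas}}$ is taken as the maximum over the bid profiles considered); in particular, if the problem becomes infeasible whenever any two bidders are removed ($k_{\mathrm{feas}}=1$), the inequality holds with constant $1$.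
   Context: Market model. $L=\{1,\dots,|L|\}$ is a finite set of bidders and $t\ge1$. Bidder $l$ submits a bid function $b_l:\hat{\mathcal X}_l\to\mathbb{R}_+$ with $0\in\hat{\mathcal X}_l\subseteq\mathbb{R}^t_+$, $b_l(0)=0$; a bid profile is $\mathcal{B}=\{b_l\}_{l\in L}$. Fixed functions $d:\mathbb{R}^{t|L|}_+\times\mathbb{R}^p\to\mathbb{R}$ and $g:\mathbb{R}^{t|L|}_+\times\mathbb{R}^p\to\mathbb{R}^q$ are given. For $S\subseteq L$, $$J(\mathcal{B}_S)=\min\Big\{\sum_{l\in S}b_l(x_l)+d(x,y):\ x\in\textstyle\prod_{l\in L}\hat{\mathcal X}_l,\ y\in\mathbb{R}^p,\ g(x,y)\le0,\ x_l=0\ \forall l\notin S\Big\},$$ with value $+\infty$ if the problem is infeasible (minima assumed attained when finite). Supermodularity ratio of the market objective: the largest $\gamma\ge0$ such that for every bid profile $\mathcal{B}$ and all $K,S\subseteq L$ with $J(\mathcal{B}_{S\setminus K})<\infty$, $$\gamma\sum_{l\in K}\big[J(\mathcal{B}_{S\setminus\{l\}})-J(\mathcal{B}_S)\big]\le J(\mathcal{B}_{S\setminus K})-J(\mathcal{B}_S);$$ the objective is weakly supermodular if this ratio is positive. *)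

theory Defs
  imports "HOL-Analysis.Analysis"
begin

text \<open>Bidders form a finite set L (of some type 'b); each decision x_l lies in R^t,
  modelled as real^'t; auxiliary variables y lie in real^'p; constraint values g lie
  in real^'q.\<close>

definition market_bids ::
  "'b set \<Rightarrow> ('b \<Rightarrow> (real^'t) set) \<Rightarrow> ('b \<Rightarrow> real^'t \<Rightarrow> real) \<Rightarrow> bool" where
  "market_bids L Xh b \<longleftrightarrow> finite L \<and>
     (\<forall>l\<in>L. 0 \<in> Xh l \<and> Xh l \<subseteq> {v. \<forall>i. 0 \<le> v $ i} \<and> b l 0 = 0 \<and>
             (\<forall>v\<in>Xh l. 0 \<le> b l v))"

definition feas ::
  "'b set \<Rightarrow> ('b \<Rightarrow> (real^'t) set) \<Rightarrow> (('b \<Rightarrow> real^'t) \<Rightarrow> real^'p \<Rightarrow> real^'q)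
    \<Rightarrow> 'b set \<Rightarrow> (('b \<Rightarrow> real^'t) \<times> (real^'p)) set" where
  "feas L Xh g S = {(x, y). x \<in> PiE L Xh \<and> (\<forall>i. g x y $ i \<le> 0) \<and> (\<forall>l\<in>L - S. x l = 0)}"

definition market_obj ::
  "('b \<Rightarrow> real^'t \<Rightarrow> real) \<Rightarrow> (('b \<Rightarrow> real^'t) \<Rightarrow> real^'p \<Rightarrow> real)
    \<Rightarrow> 'b set \<Rightarrow> (('b \<Rightarrow> real^'t) \<times> (real^'p)) \<Rightarrow> real" where
  "market_obj b d S xy = (\<Sum>l\<in>S. b l (fst xy l)) + d (fst xy) (snd xy)"

text \<open>J(B_S): infimum (in the extended reals) of the objective over the feasible set;
  equals +infinity when infeasible.\<close>
definition Jm ::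
  "'b set \<Rightarrow> ('b \<Rightarrow> (real^'t) set) \<Rightarrow> ('b \<Rightarrow> real^'t \<Rightarrow> real)
    \<Rightarrow> (('b \<Rightarrow> real^'t) \<Rightarrow> real^'p \<Rightarrow> real) \<Rightarrow> (('b \<Rightarrow> real^'t) \<Rightarrow> real^'p \<Rightarrow> real^'q)
    \<Rightarrow> 'b set \<Rightarrow> ereal" where
  "Jm L Xh b d g S = (INF xy\<in>feas L Xh g S. ereal (market_obj b d S xy))"

definition minima_attained ::
  "'b set \<Rightarrow> ('b \<Rightarrow> (real^'t) set) \<Rightarrow> ('b \<Rightarrow> real^'t \<Rightarrow> real)
    \<Rightarrow> (('b \<Rightarrow> real^'t) \<Rightarrow> real^'p \<Rightarrow> real) \<Rightarrow> (('b \<Rightarrow> real^'t) \<Rightarrow> real^'p \<Rightarrow> real^'q) \<Rightarrow> bool" where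
  "minima_attained L Xh b d g \<longleftrightarrow>
     (\<forall>S\<subseteq>L. feas L Xh g S \<noteq> {} \<longrightarrow>
        (\<exists>xy\<in>feas L Xh g S. \<forall>xy'\<in>feas L Xh g S. market_obj b d S xy \<le> market_obj b d S xy'))"

definition k_feas ::
  "'b set \<Rightarrow> ('b \<Rightarrow> (real^'t) set) \<Rightarrow> ('b \<Rightarrow> real^'t \<Rightarrow> real)
    \<Rightarrow> (('b \<Rightarrow> real^'t) \<Rightarrow> real^'p \<Rightarrow> real) \<Rightarrow> (('b \<Rightarrow> real^'t) \<Rightarrow> real^'p \<Rightarrow> real^'q) \<Rightarrow> nat" where
  "k_feas L Xh b d g = Max {card R | R. R \<subseteq> L \<and> Jm L Xh b d g (L - R) < \<infinity>}"

end

theory Submission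
  imports Defs
begin

text \<open>Removing bidders only shrinks the feasible set, so J is antitone; with minima attained
  it is real-valued on every feasible coalition. For an antitone real set function f, each
  marginal f(S - {l}) - f(S) with l \<in> K \<inter> S lies between 0 and f(S - K) - f(S), and it
  vanishes for l \<notin> S. Hence the sum of the marginals is at most |K \<inter> S| (f(S - K) - f(S)),
  and |K \<inter> S| \<le> k_feas because removing the coalition L - (S - K) keeps the problem feasible.\<close>

lemma sum_marginals_le_card_mult_diff:
  fixes f :: "'a set \<Rightarrow> real"
  assumes "finite K"
    and antitone: "\<And>A B. S - K \<subseteq> A \<Longrightarrow> A \<subseteq> B \<Longrightarrow> B \<subseteq> S \<Longrightarrow> f B \<le> f A"
  shows "(\<Sum>l\<in>K. f (S - {l}) - f S) \<le> real (card (K \<inter> S)) * (f (S - K) - f S)"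
proof -
  have "(\<Sum>l\<in>K. f (S - {l}) - f S) = (\<Sum>l\<in>K \<inter> S. f (S - {l}) - f S)"
    by (rule sum.mono_neutral_right) (use \<open>finite K\<close> in \<open>auto simp: Diff_insert_absorb\<close>)
  also have "\<dots> \<le> (\<Sum>l\<in>K \<inter> S. f (S - K) - f S)"
    by (rule sum_mono) (auto intro: antitone)
  finally show ?thesis by simp
qed

lemma market_obj_eq_on_smaller_support:
  assumes "market_bids L Xh b" and "S' \<subseteq> S" "S \<subseteq> L"
    and "xy \<in> feas L Xh g S'"
  shows "market_obj b d S xy = market_obj b d S' xy"
proof -
  have "finite S" using assms(1,3) finite_subset unfolding market_bids_def by blast
  have zero: "\<forall>l\<in>S - S'. b l (fst xy l) = 0"
    using assms unfolding feas_def market_bids_def by auto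
  have "(\<Sum>l\<in>S. b l (fst xy l)) = (\<Sum>l\<in>S'. b l (fst xy l)) + (\<Sum>l\<in>S - S'. b l (fst xy l))"
    using \<open>finite S\<close> \<open>S' \<subseteq> S\<close> by (metis add.commute sum.subset_diff)
  also have "(\<Sum>l\<in>S - S'. b l (fst xy l)) = 0" using zero by simp
  finally show ?thesis unfolding market_obj_def by simp
qed

lemma feas_mono: "S' \<subseteq> S \<Longrightarrow> feas L Xh g S' \<subseteq> feas L Xh g S"
  unfolding feas_def by auto

lemma Jm_antimono:
  assumes "market_bids L Xh b" and "S' \<subseteq> S" "S \<subseteq> L"
  shows "Jm L Xh b d g S \<le> Jm L Xh b d g S'"
  unfolding Jm_def
proof (rule INF_greatest)
  fix xy assume xy: "xy \<in> feas L Xh g S'"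
  then have "(INF xy\<in>feas L Xh g S. ereal (market_obj b d S xy)) \<le> ereal (market_obj b d S xy)"
    using feas_mono[OF assms(2)] by (blast intro: INF_lower)
  then show "(INF xy\<in>feas L Xh g S. ereal (market_obj b d S xy)) \<le> ereal (market_obj b d S' xy)"
    using market_obj_eq_on_smaller_support[OF assms xy] by simp
qed

lemma Jm_real_if_finite:
  assumes "minima_attained L Xh b d g" and "S \<subseteq> L" and "Jm L Xh b d g S < \<infinity>"
  shows "Jm L Xh b d g S = ereal (real_of_ereal (Jm L Xh b d g S))"
proof -
  have "feas L Xh g S \<noteq> {}" using assms(3) unfolding Jm_def by (auto simp: top_ereal_def)
  then obtain xy where xy: "xy \<in> feas L Xh g S"
    and min: "\<forall>xy'\<in>feas L Xh g S. market_obj b d S xy \<le> market_obj b d S xy'"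
    using assms(1,2) unfolding minima_attained_def by blast
  have "Jm L Xh b d g S = ereal (market_obj b d S xy)"
    unfolding Jm_def by (rule antisym, rule INF_lower[OF xy], rule INF_greatest, use min in auto)
  then show ?thesis by simp
qed

lemma card_le_k_feas:
  assumes "finite L" and "R \<subseteq> L" and "Jm L Xh b d g (L - R) < \<infinity>"
  shows "card R \<le> k_feas L Xh b d g"
proof -
  have "{card R | R. R \<subseteq> L \<and> Jm L Xh b d g (L - R) < \<infinity>} \<subseteq> card ` Pow L" by auto
  then have "finite {card R | R. R \<subseteq> L \<and> Jm L Xh b d g (L - R) < \<infinity>}"
    using \<open>finite L\<close> finite_subset by blast
  then show ?thesis unfolding k_feas_def by (rule Max_ge) (use assms(2,3) in auto)
qed

theorem theorem2:
  fixes L :: "'b set" and Xh :: "'b \<Rightarrow> (real^'t) set" and b :: "'b \<Rightarrow> real^'t \<Rightarrow> real"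
    and d :: "('b \<Rightarrow> real^'t) \<Rightarrow> real^'p \<Rightarrow> real"
    and g :: "('b \<Rightarrow> real^'t) \<Rightarrow> real^'p \<Rightarrow> real^'q"
  assumes "market_bids L Xh b"
    and "minima_attained L Xh b d g"
    and "Jm L Xh b d g L < \<infinity>"
    and "k_feas L Xh b d g \<ge> 1"
  shows "\<forall>K S. K \<subseteq> L \<longrightarrow> S \<subseteq> L \<longrightarrow> Jm L Xh b d g (S - K) < \<infinity> \<longrightarrow>
           ereal (1 / real (k_feas L Xh b d g)) *
             (\<Sum>l\<in>K. Jm L Xh b d g (S - {l}) - Jm L Xh b d g S)
           \<le> Jm L Xh b d g (S - K) - Jm L Xh b d g S"
proof (intro allI impI)
  fix K S assume K: "K \<subseteq> L" and S: "S \<subseteq> L" and feasible: "Jm L Xh b d g (S - K) < \<infinity>"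
  let ?J = "Jm L Xh b d g" and ?k = "k_feas L Xh b d g"
  define f where "f A = real_of_ereal (?J A)" for A
  have finite_L: "finite L" using assms(1) unfolding market_bids_def by simp
  have J_real: "?J A = ereal (f A)" and f_antitone: "f B \<le> f A"
    if "S - K \<subseteq> A" "A \<subseteq> B" "B \<subseteq> S" for A B
  proof -
    have "?J B \<le> ?J A" "?J A \<le> ?J (S - K)"
      using that S by (auto intro!: Jm_antimono[OF assms(1)])
    then have "?J A < \<infinity>" "?J B < \<infinity>" using feasible by auto
    then have "?J A = ereal (f A)" "?J B = ereal (f B)"
      unfolding f_def using that S by (auto intro!: Jm_real_if_finite[OF assms(2)])
    with \<open>?J B \<le> ?J A\<close> show "?J A = ereal (f A)" "f B \<le> f A" by auto
  qed
  have "?J (S - {l}) - ?J S = ereal (f (S - {l}) - f S)" if "l \<in> K" for l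
  proof -
    have "S - K \<subseteq> S - {l}" using that by blast
    then show ?thesis using J_real[of "S - {l}" "S - {l}"] J_real[of S S] by simp
  qed
  then have "(\<Sum>l\<in>K. ?J (S - {l}) - ?J S) = (\<Sum>l\<in>K. ereal (f (S - {l}) - f S))"
    by (rule sum.cong[OF refl])
  then have sum_eq: "(\<Sum>l\<in>K. ?J (S - {l}) - ?J S) = ereal (\<Sum>l\<in>K. f (S - {l}) - f S)"
    by (simp only: sum_ereal)
  have "card (K \<inter> S) \<le> card (L - (S - K))"
    using K S finite_L by (intro card_mono) auto
  also have "card (L - (S - K)) \<le> ?k"
  proof (rule card_le_k_feas[OF finite_L])
    have "L - (L - (S - K)) = S - K" using S by blast
    then show "?J (L - (L - (S - K))) < \<infinity>" using feasible by simp
  qed blast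
  finally have card_le: "card (K \<inter> S) \<le> ?k" .
  have "(\<Sum>l\<in>K. f (S - {l}) - f S) \<le> real (card (K \<inter> S)) * (f (S - K) - f S)"
    using K finite_L finite_subset
    by (intro sum_marginals_le_card_mult_diff f_antitone) blast+
  also have "\<dots> \<le> real ?k * (f (S - K) - f S)"
    using card_le f_antitone[of "S - K" S] by (intro mult_right_mono) auto
  finally have "1 / real ?k * (\<Sum>l\<in>K. f (S - {l}) - f S) \<le> f (S - K) - f S"
    using assms(4) by (simp add: field_simps)
  then show "ereal (1 / real ?k) * (\<Sum>l\<in>K. ?J (S - {l}) - ?J S) \<le> ?J (S - K) - ?J S"
    using sum_eq J_real[of S S] J_real[of "S - K" S] by simp
qed

end
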